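(* Let $\mathcal{Q}\subseteq\mathbb{R}^n$ be a configuration manifold and consider the robotic system $$\mathbf{D}(\mathbf{q})\ddot{\mathbf{q}}+\mathbf{C}(\mathbf{q},\dot{\mathbf{q}})\dot{\mathbf{q}}+\mathbf{G}(\mathbf{q})=\mathbf{B}\mathbf{u},\qquad \mathbf{u}\in\mathbb{R}^m,$$ written in control affine form $\dot{\mathbf{x}}=\mathbf{f}(\mathbf{x})+\mathbf{g}(\mathbf{x})\mathbf{u}$ with $\mathbf{x}=(\mathbf{q},\dot{\mathbf{q}})\in T\mathcal{Q}$, $$\mathbf{f}(\mathbf{x})=\begin{bmatrix}\dot{\mathbf{q}}\\ -\mathbf{D}(\mathbf{q})^{-1}\big(\mathbf{C}(\mathbf{q},\dot{\mathbf{q}})\dot{\mathbf{q}}+\mathbf{G}(\mathbf{q})\big)\end{bmatrix},\qquad \mathbf{g}(\mathbf{x})=\begin{bmatrix}\mathbf{0}\\ \mathbf{D}(\mathbf{q})^{-1}\mathbf{B}\end{bmatrix}.$$ Let $h_0:\mathcal{Q}\to\mathbb{R}$ be continuously differentiable, defining $\mathcal{C}_0=\{\mathbf{q}\in\mathcal{Q}: h_0(\mathbf{q})\ge 0\}$, and suppose there exist a continuously differentiable $\mathbf{k}_0:\mathcal{Q}\to\mathbb{R}^n$ and an extended class $\mathcal{K}_\infty$ function $\alpha$ such that $\nabla h_0(\mathbf{q})\cdot\mathbf{k}_0(\mathbf{q})>-\alpha(h_0(\mathbf{q}))$ for all $\mathbf{q}\in\mathcal{Q}$. Fix $\mu>0$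 and define $$h(\mathbf{q},\dot{\mathbf{q}})=h_0(\mathbf{q})-\frac{1}{2\mu}(\dot{\mathbf{q}}-\mathbf{k}_0(\mathbf{q}))^\top\mathbf{D}(\mathbf{q})(\dot{\mathbf{q}}-\mathbf{k}_0(\mathbf{q})),\qquad \mathcal{C}=\{(\mathbf{q},\dot{\mathbf{q}})\in T\mathcal{Q}: h(\mathbf{q},\dot{\mathbf{q}})\ge0\}.$$ If the system is fully actuated ($m=n$ and $\mathbf{B}$ invertible), then $h$ is a control barrier function for the control affine system $\dot{\mathbf{x}}=\mathbf{f}(\mathbf{x})+\mathbf{g}(\mathbf{x})\mathbf{u}$ on $\mathcal{C}$.
   Context: $\mathbf{D}(\mathbf{q})\in\mathbb{R}^{n\times n}$ is the positive definite inertia matrix (assumed continuously differentiable in $\mathbf{q}$), $\mathbf{C}$ the Coriolis matrix, $\mathbf{G}$ the gravity/potential term, $\mathbf{B}\in\mathbb{R}^{n\times m}$ the actuation matrix. A continuous function $\alpha:\mathbb{R}\to\mathbb{R}$ is extended class $\mathcal{K}_\infty$ if $\alpha(0)=0$, $\alpha$ is strictly increasing and $\lim_{s\to\pm\infty}\alpha(s)=\pm\infty$. For a scalar $h$, $L_{\mathbf{f}}h(\mathbf{x})=\nabla h(\mathbf{x})\cdot\mathbf{f}(\mathbf{x})$ and $L_{\mathbf{g}}h(\mathbf{x})=\nabla h(\mathbf{x})^\top\mathbf{g}(\mathbf{x})$. A continuously differentiable $h$ defining $\mathcal{C}=\{h\ge0\}$ is a control barrier function (CBF) for $\dot{\mathbf{x}}=\mathbf{f}(\mathbf{x})+\mathbf{g}(\mathbf{x})\mathbf{u}$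 on $\mathcal{C}$ if there exists an extended class $\mathcal{K}_\infty$ function $\alpha$ such that for all states $\mathbf{x}$: $\sup_{\mathbf{u}\in\mathbb{R}^m}\{L_{\mathbf{f}}h(\mathbf{x})+L_{\mathbf{g}}h(\mathbf{x})\mathbf{u}\}>-\alpha(h(\mathbf{x}))$. *)

theory Defs
  imports "HOL-Analysis.Analysis"
begin

definition C1_on :: "'a::real_normed_vector set \<Rightarrow> ('a \<Rightarrow> 'b::real_normed_vector) \<Rightarrow> bool" where
  "C1_on S F \<longleftrightarrow> (\<exists>F'. (\<forall>x\<in>S. (F has_derivative blinfun_apply (F' x)) (at x)) \<and> continuous_on S F')"

definition ext_class_Kinf :: "(real \<Rightarrow> real) \<Rightarrow> bool" where
  "ext_class_Kinf \<alpha> \<longleftrightarrow> continuous_on UNIV \<alpha> \<and> \<alpha> 0 = 0 \<and> strict_mono \<alpha> \<and>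
     filterlim \<alpha> at_top at_top \<and> filterlim \<alpha> at_bot at_bot"

definition pos_def_mat :: "real^'n^'n \<Rightarrow> bool" where
  "pos_def_mat M \<longleftrightarrow> transpose M = M \<and> (\<forall>v. v \<noteq> 0 \<longrightarrow> v \<bullet> (M *v v) > 0)"

text \<open>L_f h(x) = Dh(x)(f x),
L_g h(x) u = Dh(x)(g x u); the supremum over u is taken in the extended reals.\<close>
definition cbf_on ::
  "'x::real_normed_vector set \<Rightarrow> 'x set \<Rightarrow> ('x \<Rightarrow> real) \<Rightarrow> ('x \<Rightarrow> 'x) \<Rightarrow> ('x \<Rightarrow> 'u \<Rightarrow> 'x) \<Rightarrow> bool" where
  "cbf_on X C h f g \<longleftrightarrow> C1_on X h \<and> C = {x\<in>X. h x \<ge> 0} \<and>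
     (\<exists>\<alpha>. ext_class_Kinf \<alpha> \<and>
        (\<forall>x\<in>X. (SUP u. ereal (frechet_derivative h (at x) (f x) + frechet_derivative h (at x) (g x u)))
                 > ereal (- \<alpha> (h x))))"

end

theory Submission
  imports Defs
begin

text \<open>Write \<open>e = v - k\<^sub>0 q\<close> for the velocity error. Since \<open>D q\<close> is symmetric, the derivative
  of \<open>h\<close> along the input direction \<open>(0, D(q)\<^sup>-\<^sup>1 B u)\<close> is \<open>-(1/\<mu>) e \<bullet> B u\<close>. With \<open>B\<close> invertible
  this is a nonzero linear functional of \<open>u\<close> as soon as \<open>e \<noteq> 0\<close>, and then the supremum
  over \<open>u\<close> is \<open>\<infinity>\<close>. Where \<open>e = 0\<close> we have \<open>h = h\<^sub>0\<close>, and every term of the derivative of the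
  quadratic form carries a factor \<open>e\<close>, so the drift term reduces to
  \<open>\<nabla>h\<^sub>0(q) \<bullet> k\<^sub>0(q) > -\<alpha>(h\<^sub>0 q)\<close>.\<close>

lemma bounded_bilinear_matrix_vector_mult:
  "bounded_bilinear ((*v) :: real^'n^'m \<Rightarrow> real^'n \<Rightarrow> real^'m)"
proof -
  have "bilinear ((*v) :: real^'n^'m \<Rightarrow> real^'n \<Rightarrow> real^'m)"
    unfolding bilinear_def
    by (auto intro!: linearI simp: matrix_vector_mult_add_rdistrib matrix_vector_right_distrib
        matrix_vector_mult_scaleR vec_eq_iff matrix_vector_mult_def sum_distrib_left sum.distrib algebra_simps)
  then show ?thesis
    by (simp add: bilinear_conv_bounded_bilinear)
qed

lemma matrix_inv_right:
  "invertible (A :: 'a::semiring_1^'n^'m) \<Longrightarrow> A ** matrix_inv A = mat 1"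
  unfolding invertible_def matrix_inv_def by (rule someI_ex[THEN conjunct1])

lemma matrix_vector_mult_matrix_inv_cancel:
  "invertible (A :: 'a::comm_semiring_1^'n^'m) \<Longrightarrow> A *v (matrix_inv A *v x) = x"
  by (simp add: matrix_vector_mul_assoc matrix_inv_right)

lemma pos_def_mat_invertible: "pos_def_mat A \<Longrightarrow> invertible A"
  unfolding invertible_left_inverse matrix_left_invertible_ker pos_def_mat_def
  by (metis inner_zero_right less_irrefl)

lemma symmetric_matrix_inner_commute:
  fixes A :: "real^'n^'n"
  assumes "transpose A = A"
  shows "x \<bullet> (A *v y) = y \<bullet> (A *v x)"
proof -
  have "y \<bullet> (A *v x) = (transpose A *v y) \<bullet> x"
    by (simp add: dot_lmul_matrix)
  with assms show ?thesis
    by (simp add: inner_commute)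
qed

lemma has_derivative_compose_fst:
  assumes "(f has_derivative f') (at (fst x))"
  shows "((\<lambda>x. f (fst x)) has_derivative (\<lambda>y. f' (fst y))) (at x)"
  using diff_chain_at[OF has_derivative_fst[OF has_derivative_ident] assms] by (simp add: o_def)

lemma C1_on_imp_differentiable: "C1_on S f \<Longrightarrow> x \<in> S \<Longrightarrow> f differentiable (at x)"
  unfolding C1_on_def differentiable_def by blast

lemma C1_on_imp_continuous_on: "C1_on S f \<Longrightarrow> continuous_on S f"
  by (meson C1_on_imp_differentiable continuous_at_imp_continuous_on differentiable_imp_continuous_within)

lemma C1_on_const: "C1_on S (\<lambda>x. c)"
  unfolding C1_on_def
  by (rule exI[where x="\<lambda>x. 0"]) (auto intro!: derivative_eq_intros)

lemma C1_on_snd: "C1_on S snd"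
  unfolding C1_on_def
  by (rule exI[where x="\<lambda>x. snd_blinfun"]) (auto intro!: derivative_eq_intros continuous_intros)

lemma C1_on_compose_fst:
  fixes f :: "'a::real_normed_vector \<Rightarrow> 'b::real_normed_vector" and T :: "'c::real_normed_vector set"
  assumes "C1_on S f"
  shows "C1_on (S \<times> T) (\<lambda>x. f (fst x))"
proof -
  obtain F' where F': "\<forall>x\<in>S. (f has_derivative blinfun_apply (F' x)) (at x)" "continuous_on S F'"
    using assms unfolding C1_on_def by blast
  define P' :: "'a \<times> 'c \<Rightarrow> ('a \<times> 'c) \<Rightarrow>\<^sub>L 'b" where "P' x = F' (fst x) o\<^sub>L fst_blinfun" for x
  have "((\<lambda>x. f (fst x)) has_derivative blinfun_apply (P' x)) (at x)" if "x \<in> S \<times> T" for x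
  proof -
    have "((\<lambda>x. f (fst x)) has_derivative (\<lambda>y. F' (fst x) (fst y))) (at x)"
      using F'(1) that by (auto intro: has_derivative_compose_fst)
    then show ?thesis
      by (rule has_derivative_eq_rhs) (simp add: P'_def fun_eq_iff)
  qed
  moreover have "continuous_on (S \<times> T) (\<lambda>x. F' (fst x))"
    by (rule continuous_on_compose2[OF F'(2) continuous_on_fst[OF continuous_on_id]]) auto
  then have "continuous_on (S \<times> T) P'"
    unfolding P'_def by (rule bounded_bilinear.continuous_on[OF bounded_bilinear_blinfun_compose _ continuous_on_const])
  ultimately show ?thesis
    unfolding C1_on_def by blast
qed

lemma C1_on_diff:
  fixes f g :: "'a::real_normed_vector \<Rightarrow> 'b::real_normed_vector"
  assumes "C1_on S f" and "C1_on S g"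
  shows "C1_on S (\<lambda>x. f x - g x)"
proof -
  obtain F' where "\<forall>x\<in>S. (f has_derivative blinfun_apply (F' x)) (at x)" "continuous_on S F'"
    using assms(1) unfolding C1_on_def by blast
  moreover obtain G' where "\<forall>x\<in>S. (g has_derivative blinfun_apply (G' x)) (at x)" "continuous_on S G'"
    using assms(2) unfolding C1_on_def by blast
  ultimately show ?thesis
    unfolding C1_on_def
    by (intro exI[where x="\<lambda>x. F' x - G' x"])
      (auto intro!: continuous_intros derivative_eq_intros simp: minus_blinfun.rep_eq)
qed

lemma C1_on_bounded_bilinear:
  fixes prod :: "'a::real_normed_vector \<Rightarrow> 'b::real_normed_vector \<Rightarrow> 'c::real_normed_vector"
    and f :: "'x::real_normed_vector \<Rightarrow> 'a" and g :: "'x \<Rightarrow> 'b"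
  assumes "bounded_bilinear prod" and "C1_on S f" and "C1_on S g"
  shows "C1_on S (\<lambda>x. prod (f x) (g x))"
proof -
  interpret bounded_bilinear prod by fact
  obtain F' where F': "\<forall>x\<in>S. (f has_derivative blinfun_apply (F' x)) (at x)" "continuous_on S F'"
    using assms(2) unfolding C1_on_def by blast
  obtain G' where G': "\<forall>x\<in>S. (g has_derivative blinfun_apply (G' x)) (at x)" "continuous_on S G'"
    using assms(3) unfolding C1_on_def by blast
  define P' where "P' x = (prod_right (f x) o\<^sub>L G' x) + (prod_left (g x) o\<^sub>L F' x)" for x
  have "((\<lambda>x. prod (f x) (g x)) has_derivative blinfun_apply (P' x)) (at x)" if "x \<in> S" for x
    using FDERIV[OF F'(1)[rule_format, OF that] G'(1)[rule_format, OF that]]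
    by (simp add: P'_def plus_blinfun.rep_eq)
  moreover have "continuous_on S P'"
    unfolding P'_def
    using F'(2) G'(2) C1_on_imp_continuous_on[OF assms(2)] C1_on_imp_continuous_on[OF assms(3)]
    by (intro continuous_intros)
  ultimately show ?thesis
    unfolding C1_on_def by blast
qed

lemma ereal_less_SUP_affine:
  fixes l :: "'u::real_vector \<Rightarrow> real"
  assumes "linear l" and "(\<exists>w. l w \<noteq> 0) \<or> b < a"
  shows "ereal b < (SUP u. ereal (a + l u))"
proof -
  have "\<exists>u. b < a + l u"
  proof (cases "\<exists>w. l w \<noteq> 0")
    case True
    then obtain w where "l w \<noteq> 0" by blast
    then have "a + l (((b - a + 1) / l w) *\<^sub>R w) = b + 1"
      by (simp add: linear_scale[OF assms(1)])
    then show ?thesis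
      by (metis less_add_one)
  next
    case False
    with assms show ?thesis
      by (metis add.right_neutral linear_0)
  qed
  then show ?thesis
    by (simp add: less_SUP_iff)
qed

text \<open>Where \<open>L\<^sub>g h\<close> is a nonzero linear functional, the supremum over \<open>u\<close> is \<open>\<infinity>\<close>.\<close>
lemma cbf_onI:
  assumes "C1_on X h" and "ext_class_Kinf \<alpha>"
    and "\<And>x. x \<in> X \<Longrightarrow> linear (g x)"
    and "\<And>x. x \<in> X \<Longrightarrow> (\<forall>u. frechet_derivative h (at x) (g x u) = 0) \<Longrightarrow>
      frechet_derivative h (at x) (f x) > - \<alpha> (h x)"
  shows "cbf_on X {x\<in>X. h x \<ge> 0} h f g"
proof -
  have "ereal (- \<alpha> (h x)) <
      (SUP u. ereal (frechet_derivative h (at x) (f x) + frechet_derivative h (at x) (g x u)))"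
    if "x \<in> X" for x
  proof (rule ereal_less_SUP_affine)
    have "linear (frechet_derivative h (at x))"
      using C1_on_imp_differentiable[OF assms(1) that] frechet_derivative_works has_derivative_linear by blast
    then show "linear (\<lambda>u. frechet_derivative h (at x) (g x u))"
      using linear_compose[OF assms(3)[OF that]] by (simp add: o_def)
    show "(\<exists>u. frechet_derivative h (at x) (g x u) \<noteq> 0) \<or> - \<alpha> (h x) < frechet_derivative h (at x) (f x)"
      using assms(4)[OF that] by blast
  qed
  with assms(1,2) show ?thesis
    unfolding cbf_on_def by blast
qed

definition energy_barrier ::
  "real \<Rightarrow> ('q \<Rightarrow> real) \<Rightarrow> ('q \<Rightarrow> real^'n) \<Rightarrow> ('q \<Rightarrow> real^'n^'n) \<Rightarrow> 'q \<times> (real^'n) \<Rightarrow> real" where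
  "energy_barrier \<mu> h0 k0 D =
     (\<lambda>x. h0 (fst x) - (1 / (2 * \<mu>)) * ((snd x - k0 (fst x)) \<bullet> (D (fst x) *v (snd x - k0 (fst x)))))"

lemma C1_on_energy_barrier:
  fixes h0 :: "'q::real_normed_vector \<Rightarrow> real"
  assumes "C1_on Q h0" and "C1_on Q k0" and "C1_on Q D"
  shows "C1_on (Q \<times> UNIV) (energy_barrier \<mu> h0 k0 D)"
proof -
  have error: "C1_on (Q \<times> UNIV) (\<lambda>x. snd x - k0 (fst x))"
    by (rule C1_on_diff[OF C1_on_snd C1_on_compose_fst[OF assms(2)]])
  have "C1_on (Q \<times> UNIV) (\<lambda>x. D (fst x) *v (snd x - k0 (fst x)))"
    by (rule C1_on_bounded_bilinear[OF bounded_bilinear_matrix_vector_mult C1_on_compose_fst[OF assms(3)] error])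
  then have "C1_on (Q \<times> UNIV) (\<lambda>x. (snd x - k0 (fst x)) \<bullet> (D (fst x) *v (snd x - k0 (fst x))))"
    by (rule C1_on_bounded_bilinear[OF bounded_bilinear_inner error])
  then show ?thesis
    unfolding energy_barrier_def
    by (intro C1_on_diff C1_on_compose_fst[OF assms(1)] C1_on_bounded_bilinear[OF bounded_bilinear_mult C1_on_const])
qed

lemma has_derivative_energy_barrier:
  fixes h0 :: "'q::real_normed_vector \<Rightarrow> real" and v :: "real^'n"
  assumes "(h0 has_derivative h0') (at q)" and "(k0 has_derivative k0') (at q)" and "(D has_derivative D') (at q)"
  defines "e \<equiv> v - k0 q"
  shows "(energy_barrier \<mu> h0 k0 D has_derivative
    (\<lambda>y. h0' (fst y) - (1 / (2 * \<mu>)) *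
      ((snd y - k0' (fst y)) \<bullet> (D q *v e) + e \<bullet> (D' (fst y) *v e + D q *v (snd y - k0' (fst y))))))
    (at (q, v))"
proof -
  have error: "((\<lambda>x. snd x - k0 (fst x)) has_derivative (\<lambda>y. snd y - k0' (fst y))) (at (q, v))"
    using assms(2) by (auto intro!: derivative_eq_intros has_derivative_compose_fst)
  have weighted_error: "((\<lambda>x. D (fst x) *v (snd x - k0 (fst x))) has_derivative
      (\<lambda>y. D' (fst y) *v e + D q *v (snd y - k0' (fst y)))) (at (q, v))"
    using bounded_bilinear.FDERIV[OF bounded_bilinear_matrix_vector_mult
        has_derivative_compose_fst[of D D' "(q, v)"] error] assms(3)
    by (simp add: e_def add.commute)
  have quadratic_form: "((\<lambda>x. (snd x - k0 (fst x)) \<bullet> (D (fst x) *v (snd x - k0 (fst x)))) has_derivative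
      (\<lambda>y. (snd y - k0' (fst y)) \<bullet> (D q *v e) + e \<bullet> (D' (fst y) *v e + D q *v (snd y - k0' (fst y)))))
      (at (q, v))"
    using bounded_bilinear.FDERIV[OF bounded_bilinear_inner error weighted_error]
    by (simp add: e_def add.commute)
  show ?thesis
    unfolding energy_barrier_def
    using has_derivative_compose_fst[of h0 h0' "(q, v)"] assms(1)
    by (intro has_derivative_diff has_derivative_mult_right quadratic_form) simp
qed

lemma frechet_derivative_energy_barrier_velocity:
  fixes h0 :: "'q::real_normed_vector \<Rightarrow> real" and v :: "real^'n"
  assumes "h0 differentiable (at q)" and "k0 differentiable (at q)" and "D differentiable (at q)"
    and "transpose (D q) = D q"
  shows "frechet_derivative (energy_barrier \<mu> h0 k0 D) (at (q, v)) (0, w) = - ((v - k0 q) \<bullet> (D q *v w)) / \<mu>"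
proof -
  obtain h0' k0' D' where h0': "(h0 has_derivative h0') (at q)" and k0': "(k0 has_derivative k0') (at q)"
    and D': "(D has_derivative D') (at q)"
    using assms(1-3) unfolding differentiable_def by blast
  have "linear h0'" "linear k0'" "linear D'"
    using h0' k0' D' by (simp_all add: has_derivative_linear)
  then have "h0' 0 = 0" "k0' 0 = 0" "D' 0 = 0"
    by (simp_all add: linear_0)
  with frechet_derivative_at[OF has_derivative_energy_barrier[OF h0' k0' D'], symmetric]
    show ?thesis
    using symmetric_matrix_inner_commute[OF assms(4), of w "v - k0 q"]
    by (simp add: field_simps)
qed

lemma frechet_derivative_energy_barrier_zero_error:
  fixes h0 :: "'q::real_normed_vector \<Rightarrow> real"
  assumes "h0 differentiable (at q)" and "k0 differentiable (at q)" and "D differentiable (at q)"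
  shows "frechet_derivative (energy_barrier \<mu> h0 k0 D) (at (q, k0 q)) y = frechet_derivative h0 (at q) (fst y)"
  using frechet_derivative_at[OF has_derivative_energy_barrier[OF assms[unfolded frechet_derivative_works],
        where v = "k0 q" and \<mu> = \<mu>], symmetric]
  by simp

lemma energy_barrier_input_derivative_eq_0_imp_zero_error:
  fixes h0 :: "'q::real_normed_vector \<Rightarrow> real" and v :: "real^'n" and B :: "real^'m^'n"
  assumes "h0 differentiable (at q)" and "k0 differentiable (at q)" and "D differentiable (at q)"
    and "pos_def_mat (D q)" and "invertible B" and "\<mu> \<noteq> 0"
    and "\<forall>u. frechet_derivative (energy_barrier \<mu> h0 k0 D) (at (q, v)) (0, matrix_inv (D q) *v (B *v u)) = 0"
  shows "v = k0 q"
proof -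
  have "- ((v - k0 q) \<bullet> (v - k0 q)) / \<mu> = 0"
    using assms(7)[rule_format, of "matrix_inv B *v (v - k0 q)"] assms(4,5)
      frechet_derivative_energy_barrier_velocity[OF assms(1-3), where v = v and \<mu> = \<mu>]
    by (simp add: pos_def_mat_def pos_def_mat_invertible matrix_vector_mult_matrix_inv_cancel)
  with assms(6) show ?thesis
    by simp
qed

theorem lemma4:
  fixes Q :: "(real^'n) set"
    and D :: "real^'n \<Rightarrow> real^'n^'n"
    and Cor :: "real^'n \<Rightarrow> real^'n \<Rightarrow> real^'n^'n"
    and G :: "real^'n \<Rightarrow> real^'n"
    and B :: "real^'n^'n"
    and h0 :: "real^'n \<Rightarrow> real"
    and k0 :: "real^'n \<Rightarrow> real^'n"
    and \<alpha> :: "real \<Rightarrow> real"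
    and \<mu> :: real
  assumes "open Q"
    and "\<forall>q\<in>Q. pos_def_mat (D q)"
    and "C1_on Q D"
    and "C1_on Q h0"
    and "C1_on Q k0"
    and "ext_class_Kinf \<alpha>"
    and "\<forall>q\<in>Q. frechet_derivative h0 (at q) (k0 q) > - \<alpha> (h0 q)"
    and "\<mu> > 0"
    and "invertible B"
  shows "cbf_on (Q \<times> UNIV)
           {x \<in> Q \<times> UNIV. h0 (fst x) - (1 / (2 * \<mu>)) * ((snd x - k0 (fst x)) \<bullet> (D (fst x) *v (snd x - k0 (fst x)))) \<ge> 0}
           (\<lambda>x. h0 (fst x) - (1 / (2 * \<mu>)) * ((snd x - k0 (fst x)) \<bullet> (D (fst x) *v (snd x - k0 (fst x)))))
           (\<lambda>x. (snd x, - (matrix_inv (D (fst x)) *v (Cor (fst x) (snd x) *v snd x + G (fst x)))))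
           (\<lambda>x u. (0, matrix_inv (D (fst x)) *v (B *v u)))"
proof -
  let ?h = "energy_barrier \<mu> h0 k0 D"
  have differentiable: "h0 differentiable (at q)" "k0 differentiable (at q)" "D differentiable (at q)"
    if "q \<in> Q" for q
    using that assms(3-5) by (simp_all add: C1_on_imp_differentiable)
  have "cbf_on (Q \<times> UNIV) {x \<in> Q \<times> UNIV. ?h x \<ge> 0} ?h
      (\<lambda>x. (snd x, - (matrix_inv (D (fst x)) *v (Cor (fst x) (snd x) *v snd x + G (fst x)))))
      (\<lambda>x u. (0, matrix_inv (D (fst x)) *v (B *v u)))"
  proof (rule cbf_onI)
    show "C1_on (Q \<times> UNIV) ?h"
      using assms(4,5,3) by (rule C1_on_energy_barrier)
    show "ext_class_Kinf \<alpha>"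
      by fact
    show "linear (\<lambda>u. (0, matrix_inv (D (fst x)) *v (B *v u)))" for x
      by (intro linearI) (simp_all add: matrix_vector_right_distrib matrix_vector_mult_scaleR)
  next
    fix x
    assume "x \<in> Q \<times> UNIV"
      and no_input: "\<forall>u. frechet_derivative ?h (at x) (0, matrix_inv (D (fst x)) *v (B *v u)) = 0"
    then obtain q v where x: "x = (q, v)" and q: "q \<in> Q"
      by auto
    have "\<forall>u. frechet_derivative ?h (at (q, v)) (0, matrix_inv (D q) *v (B *v u)) = 0"
      using no_input by (simp add: x)
    then have "v = k0 q"
      using assms(2,8) q
      by (intro energy_barrier_input_derivative_eq_0_imp_zero_error[OF differentiable[OF q] _ assms(9)]) auto
    then show "- \<alpha> (?h x) < frechet_derivative ?h (at x)
        (snd x, - (matrix_inv (D (fst x)) *v (Cor (fst x) (snd x) *v snd x + G (fst x))))"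
      using assms(7) q frechet_derivative_energy_barrier_zero_error[OF differentiable[OF q]]
      by (simp add: x energy_barrier_def)
  qed
  then show ?thesis
    unfolding energy_barrier_def .
qed

end
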